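(* Let $\alpha\in(0,1)$ and let $f_k$ ($k\in\mathbb N$) be as in an admissible system. Then $\lim_{n\to\infty}m\left(\left\|\mathbb W_n^{(\mathbf L)}(f)\right\|_\infty\ne0\right)=0$, where $\mathbb W_n^{(\mathbf L)}(f):=\sum_{k>\frac1\alpha\log n}\mathbb W_n(f_k)$.
   Context: $(\mathcal X,\mathcal B,m,T)$ is an ergodic, aperiodic probability preserving system; $\log$ is base $2$. $S_n(h):=\sum_{j=0}^{n-1}h\circ T^j$; $\mathbb W_n(h)(t):=n^{-1/\alpha}S_{\lfloor nt\rfloor}(h)$, $t\in[0,1]$; $\|\cdot\|_\infty$ is the supremum over $t\in[0,1]$. $S_\alpha(\sigma,\beta,\mu)$ denotes the stable law with characteristic function $\exp\{-\sigma^\alpha|\theta|^\alpha(1-i\beta\,\mathrm{sign}(\theta)\tan(\pi\alpha/2))+i\mu\theta\}$ ($\alpha\neq1$). Triangular array: on $(\Omega,\mathcal F,\mathbb P)$ let $\{X_k(m):k,m\in\mathbb N\}$ be independent with $X_k(m)\sim S_\alpha(k^{-1/\alpha},1,0)$; $Y_k(m):=X_k(m)\mathbf 1_{[2^k\le X_k(m)\le4^k]}$; $Z_k(m):=\sum_{j=8^k}^{16^k}\frac{j}{4^k}\mathbf 1_{[j/4^k\le Y_k(m)<(j+1)/4^k]}$. Let $d_k:=4^{k^2}$. An admissible system is a sequence of measurable $f_k:\mathcal X\to\mathbb R$ such that the family $\{f_k\circ T^j:k\in\mathbb N,0\le j<2d_k\}$ has under $m$ the same joint distribution as $\{Z_k(j+1):k\in\mathbb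 N,0\le j<2d_k\}$, together with $g_k:=f_k\circ T^{d_k}$. *)

theory Defs
  imports "HOL-Probability.Probability"
begin

definition measure_preserving_sys :: "'a measure \<Rightarrow> ('a \<Rightarrow> 'a) \<Rightarrow> bool" where
  "measure_preserving_sys M T \<longleftrightarrow> T \<in> measurable M M \<and> distr M M T = M"

definition ergodic_sys :: "'a measure \<Rightarrow> ('a \<Rightarrow> 'a) \<Rightarrow> bool" where
  "ergodic_sys M T \<longleftrightarrow> (\<forall>A \<in> sets M. T -` A \<inter> space M = A \<longrightarrow>
      measure M A = 0 \<or> measure M A = 1)"

definition aperiodic_sys :: "'a measure \<Rightarrow> ('a \<Rightarrow> 'a) \<Rightarrow> bool" where
  "aperiodic_sys M T \<longleftrightarrow> (AE x in M. \<forall>n::nat. n \<ge> 1 \<longrightarrow> (T ^^ n) x \<noteq> x)"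

text \<open>Stable law \<open>S_\<alpha>(\<sigma>,\<beta>,\<mu>)\<close> (for \<open>\<alpha> \<noteq> 1\<close>), via its characteristic function.\<close>

definition has_stable_law ::
  "'b measure \<Rightarrow> ('b \<Rightarrow> real) \<Rightarrow> real \<Rightarrow> real \<Rightarrow> real \<Rightarrow> real \<Rightarrow> bool" where
  "has_stable_law P X \<alpha> \<sigma> \<beta> \<mu> \<longleftrightarrow> X \<in> borel_measurable P \<and>
     (\<forall>\<theta>::real. char (distr P borel X) \<theta> =
        exp (- complex_of_real (\<sigma> powr \<alpha> * \<bar>\<theta>\<bar> powr \<alpha>)
               * (1 - \<i> * complex_of_real (\<beta> * sgn \<theta> * tan (pi * \<alpha> / 2)))
             + \<i> * complex_of_real (\<mu> * \<theta>)))"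

text \<open>The truncation \<open>Y_k\<close> and discretisation \<open>Z_k\<close>, as functions of the value.\<close>

definition Ytrunc :: "nat \<Rightarrow> real \<Rightarrow> real" where
  "Ytrunc k x = (if 2 ^ k \<le> x \<and> x \<le> 4 ^ k then x else 0)"

definition Zdisc :: "nat \<Rightarrow> real \<Rightarrow> real" where
  "Zdisc k y = (\<Sum>j\<in>{8 ^ k .. 16 ^ k :: nat}.
      (real j / 4 ^ k) * (if real j / 4 ^ k \<le> y \<and> y < (real j + 1) / 4 ^ k then 1 else 0))"

definition dseq :: "nat \<Rightarrow> nat" where
  "dseq k = 4 ^ (k ^ 2)"

definition adm_index :: "(nat \<times> nat) set" where
  "adm_index = {(k, j). k \<ge> 1 \<and> j < 2 * dseq k}"

definition birkhoff_sum :: "('a \<Rightarrow> 'a) \<Rightarrow> nat \<Rightarrow> ('a \<Rightarrow> real) \<Rightarrow> 'a \<Rightarrow> real" where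
  "birkhoff_sum T n h x = (\<Sum>j<n. h ((T ^^ j) x))"

definition Wproc :: "real \<Rightarrow> ('a \<Rightarrow> 'a) \<Rightarrow> nat \<Rightarrow> ('a \<Rightarrow> real) \<Rightarrow> real \<Rightarrow> 'a \<Rightarrow> real" where
  "Wproc \<alpha> T n h t x = real n powr (- 1 / \<alpha>) * birkhoff_sum T (nat \<lfloor>real n * t\<rfloor>) h x"

definition WL :: "real \<Rightarrow> ('a \<Rightarrow> 'a) \<Rightarrow> (nat \<Rightarrow> 'a \<Rightarrow> real) \<Rightarrow> nat \<Rightarrow> real \<Rightarrow> 'a \<Rightarrow> real" where
  "WL \<alpha> T f n t x = (\<Sum>k. if real k > log 2 (real n) / \<alpha> then Wproc \<alpha> T n (f k) t x else 0)"

definition sup_norm01 :: "(real \<Rightarrow> real) \<Rightarrow> real" where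
  "sup_norm01 w = (SUP t\<in>{0..1}. \<bar>w t\<bar>)"

end

theory Submission
  imports Defs "HOL-Real_Asymp.Real_Asymp"
begin

text \<open>
  For \<open>k > L = log n / \<alpha>\<close> we have \<open>n < 2^k \<le> 2 d_k\<close>, so each \<open>f_k \<circ> T^j\<close> with \<open>j < n\<close>
  entering \<open>W_n^(L)(f)\<close> has the law of \<open>Z_k\<close>, which vanishes unless \<open>X_k \<ge> 2^k\<close>. The
  truncation inequality \<open>P(|Y| \<ge> 2/u) \<le> u^-1 \<integral>_{-u}^{u} (1 - Re \<phi>(t)) dt\<close>, applied to the
  characteristic function of \<open>S_\<alpha>(\<sigma>,\<beta>,0)\<close>, gives \<open>P(|Y| \<ge> a) = O((\<sigma>/a)^\<alpha>)\<close>, hence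
  \<open>m(f_k \<circ> T^j \<noteq> 0) = O(2^(-\<alpha>k) / k)\<close>. A union bound over \<open>j < n\<close> and \<open>k > L\<close> yields
  \<open>m(W_n^(L)(f) \<noteq> 0) \<le> n \<cdot> O(1/L) \<cdot> O(2^(-\<alpha>L)) = O(1 / log n)\<close>.
\<close>

lemma integral_one_minus_cos_ge:
  fixes u x :: real
  assumes "u > 0"
  shows "u * indicator {x. 2 / u \<le> \<bar>x\<bar>} x \<le> (LBINT t:{-u..u}. 1 - cos (t * x))"
proof (cases "x = 0")
  case True
  then show ?thesis using assms by (simp add: indicator_def)
next
  case False
  have "(LBINT t:{-u..u}. 1 - cos (t * x)) = (LBINT t=-u..u. 1 - cos (x * t))"
    using assms by (simp add: interval_integral_Icc mult.commute)
  also have "\<dots> = 2 * u - 2 * sin (u * x) / x"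
    using integral_cos[OF False, of "-u" u] assms
    by (subst interval_lebesgue_integral_diff) (auto intro!: interval_integrable_isCont simp: mult.commute[of x u])
  finally have int: "(LBINT t:{-u..u}. 1 - cos (t * x)) = 2 * u - 2 * (sin (u * x) / x)"
    by simp
  define q where "q = sin (u * x) / x"
  have "\<bar>q\<bar> \<le> u"
    using abs_sin_x_le_abs_x[of "u * x"] assms False by (simp add: q_def abs_mult divide_le_eq)
  moreover have "\<bar>q\<bar> \<le> u / 2" if "2 / u \<le> \<bar>x\<bar>"
  proof -
    have "\<bar>sin (u * x)\<bar> \<le> 1" by (rule abs_sin_le_one)
    also have "1 \<le> u / 2 * \<bar>x\<bar>"
      using that assms by (simp add: field_simps)
    finally show ?thesis using False by (simp add: q_def divide_le_eq)
  qed
  ultimately show ?thesis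
    unfolding int q_def[symmetric] using assms by (auto simp: indicator_def)
qed

lemma (in real_distribution) Re_char: "Re (char M t) = (LINT x|M. cos (t * x))"
proof -
  have "Re (char M t) = (LINT x|M. Re (iexp (t * x)))"
    unfolding char_def by (rule integral_Re[symmetric]) (auto intro: integrable_const_bound[where B=1])
  also have "\<dots> = (LINT x|M. cos (t * x))"
    by (simp add: Re_exp flip: of_real_mult)
  finally show ?thesis .
qed

lemma (in real_distribution) measure_abs_ge_le_integral_char:
  assumes "u > 0"
  shows "u * measure M {x. 2 / u \<le> \<bar>x\<bar>} \<le> (LBINT t:{-u..u}. 1 - Re (char M t))"
proof -
  interpret pair_sigma_finite M lborel ..
  define f where "f x t = indicator {-u..u} t * (1 - cos (t * x))" for x t :: real
  have M_UNIV: "emeasure M UNIV = 1" "measure M UNIV = 1"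
    using emeasure_space_1 prob_space by simp_all
  have f_int: "integrable (M \<Otimes>\<^sub>M lborel) (case_prod f)"
  proof -
    have "integrable (M \<Otimes>\<^sub>M lborel)
        (\<lambda>p. indicator (space M \<times> {-u..u}) p *\<^sub>R (1 - cos (snd p * fst p)))"
      by (intro integrableI_bounded_set_indicator[where B=2])
         (auto simp: lborel.emeasure_pair_measure_Times M_UNIV emeasure_lborel_Icc_eq
               intro!: order_trans[OF abs_triangle_ineq4])
    moreover have "indicator (space M \<times> {-u..u}) p *\<^sub>R (1 - cos (snd p * fst p)) = case_prod f p"
      for p :: "real \<times> real"
      by (cases p) (simp add: f_def indicator_def)
    ultimately show ?thesis by simp
  qed
  have "u * measure M {x. 2 / u \<le> \<bar>x\<bar>} = (LINT x|M. u * indicator {x. 2 / u \<le> \<bar>x\<bar>} x)"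
    by (simp add: emeasure_eq_measure)
  also have "\<dots> \<le> (LINT x|M. (LBINT t. f x t))"
    using integral_one_minus_cos_ge[OF assms]
    by (intro integral_mono' integrable_fst'[OF f_int, simplified])
       (auto simp: f_def set_lebesgue_integral_def intro!: integral_nonneg)
  also have "\<dots> = (LBINT t. (LINT x|M. f x t))"
    by (rule Fubini_integral[OF f_int, symmetric])
  also have "\<dots> = (LBINT t:{-u..u}. 1 - Re (char M t))"
  proof -
    have "(LINT x|M. f x t) = indicator {-u..u} t * (1 - (LINT x|M. cos (t * x)))" for t
      unfolding f_def integral_mult_right_zero
      by (subst Bochner_Integration.integral_diff) (auto simp: M_UNIV intro: integrable_const_bound[where B=1])
    then show ?thesis
      unfolding set_lebesgue_integral_def Re_char by simp
  qed
  finally show ?thesis .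
qed

lemma (in real_distribution) measure_abs_ge_le_char:
  assumes "u > 0" and B: "\<And>t. \<bar>t\<bar> \<le> u \<Longrightarrow> cmod (1 - char M t) \<le> B"
  shows "measure M {x. 2 / u \<le> \<bar>x\<bar>} \<le> 2 * B"
proof -
  have "u * measure M {x. 2 / u \<le> \<bar>x\<bar>} \<le> (LBINT t:{-u..u}. 1 - Re (char M t))"
    by (rule measure_abs_ge_le_integral_char[OF assms(1)])
  also have "\<dots> \<le> (LBINT t:{-u..u}. B)"
  proof (rule set_integral_mono)
    show "set_integrable lborel {-u..u} (\<lambda>t. 1 - Re (char M t))"
      by (intro borel_integrable_atLeastAtMost' continuous_at_imp_continuous_on ballI
          continuous_intros isCont_char)
    show "1 - Re (char M t) \<le> B" if "t \<in> {-u..u}" for t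
      using complex_Re_le_cmod[of "1 - char M t"] B[of t] that by (simp add: abs_le_iff)
  qed (auto simp: set_integrable_def emeasure_lborel_Icc_eq)
  also have "\<dots> = 2 * u * B"
    using assms(1) by (simp add: set_integral_const)
  finally show ?thesis
    using assms(1) by (simp add: mult.assoc)
qed

lemma norm_one_minus_exp_le:
  fixes A y :: real
  assumes "0 \<le> A"
  shows "cmod (1 - exp (- complex_of_real A + \<i> * complex_of_real y)) \<le> A + \<bar>y\<bar>"
proof -
  have "exp (- complex_of_real A + \<i> * complex_of_real y) = complex_of_real (exp (- A)) * iexp y"
    unfolding exp_add by (simp add: exp_of_real[symmetric])
  then have "1 - exp (- complex_of_real A + \<i> * complex_of_real y)
      = complex_of_real (1 - exp (- A)) + complex_of_real (exp (- A)) * (1 - iexp y)"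
    by (simp add: algebra_simps)
  also have "cmod \<dots> \<le> \<bar>1 - exp (- A)\<bar> + exp (- A) * cmod (1 - iexp y)"
    by (rule order_trans[OF norm_triangle_ineq]) (simp add: norm_mult del: of_real_diff)
  also have "\<dots> \<le> A + 1 * \<bar>y\<bar>"
  proof (rule add_mono)
    show "\<bar>1 - exp (- A)\<bar> \<le> A"
      using exp_ge_add_one_self[of "- A"] assms by simp
    show "exp (- A) * cmod (1 - iexp y) \<le> 1 * \<bar>y\<bar>"
      using iexp_approx1[of y 0] assms
      by (intro mult_mono) (auto simp: norm_minus_commute)
  qed
  finally show ?thesis by simp
qed

lemma stable_char_bound:
  assumes "has_stable_law P Y \<alpha> s \<beta> 0" "0 \<le> \<alpha>" "\<bar>t\<bar> \<le> u"
  shows "cmod (1 - char (distr P borel Y) t)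
    \<le> s powr \<alpha> * u powr \<alpha> * (1 + \<bar>\<beta> * tan (pi * \<alpha> / 2)\<bar>)"
proof -
  define A where "A = s powr \<alpha> * \<bar>t\<bar> powr \<alpha>"
  have char_eq: "char (distr P borel Y) t
      = exp (- complex_of_real A + \<i> * complex_of_real (A * (\<beta> * sgn t * tan (pi * \<alpha> / 2))))"
    using assms(1) unfolding has_stable_law_def A_def by (simp add: algebra_simps)
  have "cmod (1 - char (distr P borel Y) t) \<le> A + \<bar>A * (\<beta> * sgn t * tan (pi * \<alpha> / 2))\<bar>"
    unfolding char_eq by (rule norm_one_minus_exp_le) (simp add: A_def)
  also have "\<dots> \<le> A * (1 + \<bar>\<beta> * tan (pi * \<alpha> / 2)\<bar>)"
    by (auto simp: A_def abs_mult abs_sgn_eq algebra_simps)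
  also have "\<dots> \<le> s powr \<alpha> * u powr \<alpha> * (1 + \<bar>\<beta> * tan (pi * \<alpha> / 2)\<bar>)"
    using assms(2,3) by (auto simp: A_def intro!: mult_right_mono mult_left_mono powr_mono2)
  finally show ?thesis .
qed

lemma stable_tail_bound:
  assumes "prob_space P" "has_stable_law P Y \<alpha> s \<beta> 0" "0 \<le> \<alpha>" "0 < a"
  shows "measure P {\<omega>\<in>space P. a \<le> \<bar>Y \<omega>\<bar>}
    \<le> 2 * s powr \<alpha> * (2 / a) powr \<alpha> * (1 + \<bar>\<beta> * tan (pi * \<alpha> / 2)\<bar>)"
proof -
  have Y: "Y \<in> borel_measurable P"
    using assms(2) by (simp add: has_stable_law_def)
  interpret real_distribution "distr P borel Y"
    using assms(1) Y by (simp add: prob_space.real_distribution_distr)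
  have "measure P {\<omega>\<in>space P. a \<le> \<bar>Y \<omega>\<bar>} = measure (distr P borel Y) {x. 2 / (2 / a) \<le> \<bar>x\<bar>}"
    using Y by (simp add: measure_distr vimage_def Int_def conj_commute)
  also have "\<dots> \<le> 2 * (s powr \<alpha> * (2 / a) powr \<alpha> * (1 + \<bar>\<beta> * tan (pi * \<alpha> / 2)\<bar>))"
    using assms by (intro measure_abs_ge_le_char stable_char_bound) auto
  finally show ?thesis by simp
qed

lemma measure_coordinate_eq_if_distr_eq:
  fixes F :: "'i \<Rightarrow> 'a \<Rightarrow> real" and G :: "'i \<Rightarrow> 'b \<Rightarrow> real"
  assumes eq: "distr M (Pi\<^sub>M I (\<lambda>_. borel)) (\<lambda>x. \<lambda>i\<in>I. F i x)
      = distr N (Pi\<^sub>M I (\<lambda>_. borel)) (\<lambda>y. \<lambda>i\<in>I. G i y)"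
    and F: "\<And>i. i \<in> I \<Longrightarrow> F i \<in> borel_measurable M"
    and G: "\<And>i. i \<in> I \<Longrightarrow> G i \<in> borel_measurable N"
    and "i \<in> I" "B \<in> sets borel"
  shows "measure M {x\<in>space M. F i x \<in> B} = measure N {y\<in>space N. G i y \<in> B}"
proof -
  define S where "S = {\<omega>\<in>space (Pi\<^sub>M I (\<lambda>_. borel)). \<omega> i \<in> B}"
  have S: "S \<in> sets (Pi\<^sub>M I (\<lambda>_. borel))"
    unfolding S_def using \<open>i \<in> I\<close> \<open>B \<in> sets borel\<close> by measurable
  have coord: "measure M' {z\<in>space M'. H i z \<in> B} = measure (distr M' (Pi\<^sub>M I (\<lambda>_. borel)) (\<lambda>z. \<lambda>i\<in>I. H i z)) S"
    if H: "\<And>j. j \<in> I \<Longrightarrow> H j \<in> borel_measurable M'" for M' and H :: "'i \<Rightarrow> 'c \<Rightarrow> real"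
  proof -
    have Hm: "(\<lambda>z. \<lambda>i\<in>I. H i z) \<in> measurable M' (Pi\<^sub>M I (\<lambda>_. borel))"
      using H by (rule measurable_restrict)
    have "(\<lambda>z. \<lambda>i\<in>I. H i z) -` S \<inter> space M' = {z\<in>space M'. H i z \<in> B}"
      using measurable_space[OF Hm] \<open>i \<in> I\<close> by (auto simp: S_def)
    then show ?thesis
      using measure_distr[OF Hm S] by simp
  qed
  show ?thesis
    using coord[of F M, OF F] coord[of G N, OF G]
    unfolding eq by simp
qed

lemma geometric_tail_powr:
  fixes \<alpha> L :: real
  assumes "0 < \<alpha>" "0 \<le> L"
  defines "g \<equiv> \<lambda>k::nat. if L < real k then 2 powr (- \<alpha> * real k) else 0"
  shows "summable g" "suminf g \<le> 2 powr (- \<alpha> * L) / (1 - 2 powr (- \<alpha>))"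
proof -
  define r :: real where "r = 2 powr (- \<alpha>)"
  have r: "0 < r" "r < 1"
    using powr_less_mono[of "- \<alpha>" 0 "2::real"] assms(1) by (auto simp: r_def)
  define k0 where "k0 = nat \<lfloor>L\<rfloor> + 1"
  have "L < real k \<longleftrightarrow> k0 \<le> k" for k
    unfolding k0_def using assms(2) by linarith
  then have g: "g k = (if k0 \<le> k then r ^ k else 0)" for k
    by (simp add: g_def r_def powr_powr powr_realpow[symmetric] mult.commute)
  have "(\<lambda>i. g (i + k0)) sums (r ^ k0 / (1 - r))"
    using sums_mult[OF geometric_sums[of r], of "r ^ k0"] r by (simp add: g power_add mult.commute)
  then have "g sums (r ^ k0 / (1 - r) + (\<Sum>i<k0. g i))"
    by (rule sums_iff_shift[THEN iffD1])
  then have "g sums (r ^ k0 / (1 - r))"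
    by (simp add: g)
  moreover have "r ^ k0 \<le> 2 powr (- \<alpha> * L)"
    using \<open>L < real k0 \<longleftrightarrow> k0 \<le> k0\<close> assms(1)
    by (simp add: r_def powr_powr powr_realpow[symmetric] mult.commute)
  ultimately show "summable g" "suminf g \<le> 2 powr (- \<alpha> * L) / (1 - 2 powr (- \<alpha>))"
    using r by (auto simp: sums_iff r_def intro!: divide_right_mono)
qed

lemma Ytrunc_measurable [measurable]: "Ytrunc k \<in> borel_measurable borel"
  unfolding Ytrunc_def by measurable

lemma Zdisc_measurable [measurable]: "Zdisc k \<in> borel_measurable borel"
  unfolding Zdisc_def by measurable

lemma Zdisc_0 [simp]: "Zdisc k 0 = 0"
proof -
  have "\<not> real j / 4 ^ k \<le> 0" if "j \<in> {8 ^ k .. 16 ^ k}" for j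
    using that less_le_trans[of 0 "8 ^ k" j] by (simp add: not_le)
  then show ?thesis
    unfolding Zdisc_def by (intro sum.neutral) auto
qed

lemma Zdisc_Ytrunc_nonzero_imp_ge: "Zdisc k (Ytrunc k x) \<noteq> 0 \<Longrightarrow> 2 ^ k \<le> x"
  by (auto simp: Ytrunc_def split: if_splits)

lemma sup_norm01_WL_eq_0:
  assumes "\<And>k j. log 2 (real n) / \<alpha> < real k \<Longrightarrow> j < n \<Longrightarrow> f k ((T ^^ j) x) = 0"
  shows "sup_norm01 (\<lambda>t. WL \<alpha> T f n t x) = 0"
proof -
  have "WL \<alpha> T f n t x = 0" if "t \<in> {0..1}" for t
  proof -
    have "real n * t \<le> real n"
      using that by (simp add: mult_left_le)
    then have "nat \<lfloor>real n * t\<rfloor> \<le> n"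
      by linarith
    then have "birkhoff_sum T (nat \<lfloor>real n * t\<rfloor>) (f k) x = 0" if "log 2 (real n) / \<alpha> < real k" for k
      unfolding birkhoff_sum_def using assms that by (intro sum.neutral) auto
    then have "(if log 2 (real n) / \<alpha> < real k then Wproc \<alpha> T n (f k) t x else 0) = 0" for k
      by (simp add: Wproc_def)
    then show ?thesis
      by (simp add: WL_def)
  qed
  then have "sup_norm01 (\<lambda>t. WL \<alpha> T f n t x) = (SUP t\<in>{0..1::real}. 0::real)"
    unfolding sup_norm01_def by (intro SUP_cong) auto
  then show ?thesis
    by simp
qed

lemma in_adm_index_if_large:
  fixes \<alpha> :: real
  assumes "0 < \<alpha>" "\<alpha> < 1" "2 \<le> n" "log 2 (real n) / \<alpha> < real k" "j < n"
  shows "(k, j) \<in> adm_index"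
proof -
  have log_pos: "0 < log 2 (real n)"
    using assms(3) by simp
  then have "log 2 (real n) \<le> log 2 (real n) / \<alpha>"
    using assms(1,2) by (simp add: le_divide_eq)
  then have "log 2 (real n) < real k"
    using assms(4) by linarith
  then have "real n < 2 ^ k"
    using assms(3) by (simp add: log_less_iff powr_realpow)
  then have "n < 2 ^ k"
    by (metis of_nat_less_iff of_nat_numeral of_nat_power)
  then have "j < 2 ^ k"
    using assms(5) by linarith
  also have "\<dots> \<le> 2 ^ (2 * k\<^sup>2)"
    by (intro power_increasing) (auto simp: power2_eq_square)
  also have "\<dots> = dseq k"
    by (simp add: dseq_def power_mult)
  finally show ?thesis
    using \<open>log 2 (real n) < real k\<close> log_pos by (auto simp: adm_index_def)
qed

locale admissible_system =
  fixes m :: "'a measure" and T :: "'a \<Rightarrow> 'a" and \<alpha> :: real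
    and f :: "nat \<Rightarrow> 'a \<Rightarrow> real" and P :: "'b measure" and X :: "nat \<Rightarrow> nat \<Rightarrow> 'b \<Rightarrow> real"
  assumes prob_space_m: "prob_space m"
    and T_measurable: "T \<in> measurable m m"
    and alpha_pos: "0 < \<alpha>" and alpha_less_1: "\<alpha> < 1"
    and prob_space_P: "prob_space P"
    and stable_X: "\<And>k i. k \<ge> 1 \<Longrightarrow> i \<ge> 1 \<Longrightarrow> has_stable_law P (X k i) \<alpha> (real k powr (- 1 / \<alpha>)) 1 0"
    and f_measurable: "\<And>k. k \<ge> 1 \<Longrightarrow> f k \<in> borel_measurable m"
    and distr_eq: "distr m (Pi\<^sub>M adm_index (\<lambda>_. borel)) (\<lambda>x. \<lambda>(k, j)\<in>adm_index. f k ((T ^^ j) x))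
      = distr P (Pi\<^sub>M adm_index (\<lambda>_. borel))
          (\<lambda>\<omega>. \<lambda>(k, j)\<in>adm_index. Zdisc k (Ytrunc k (X k (j + 1) \<omega>)))"
begin

interpretation m: prob_space m
  by (rule prob_space_m)

lemma f_funpow_measurable: "1 \<le> k \<Longrightarrow> (\<lambda>x. f k ((T ^^ j) x)) \<in> borel_measurable m"
  using measurable_compose[OF measurable_compose_n[OF T_measurable] f_measurable] by (simp add: comp_def)

lemma X_measurable: "1 \<le> k \<Longrightarrow> 1 \<le> i \<Longrightarrow> X k i \<in> borel_measurable P"
  using stable_X by (simp add: has_stable_law_def)

lemma nonzero_set_measurable: "1 \<le> k \<Longrightarrow> {x\<in>space m. f k ((T ^^ j) x) \<noteq> 0} \<in> sets m"
  using f_funpow_measurable by measurable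

lemma measure_coordinate_nonzero_eq:
  assumes kj: "(k, j) \<in> adm_index"
  shows "measure m {x\<in>space m. f k ((T ^^ j) x) \<noteq> 0}
    = measure P {\<omega>\<in>space P. Zdisc k (Ytrunc k (X k (j + 1) \<omega>)) \<noteq> 0}"
proof -
  define F where "F i x = (case i of (k, j) \<Rightarrow> f k ((T ^^ j) x))" for i x
  define G where "G i \<omega> = (case i of (k, j) \<Rightarrow> Zdisc k (Ytrunc k (X k (j + 1) \<omega>)))" for i \<omega>
  have "measure m {x\<in>space m. F (k, j) x \<in> - {0}} = measure P {\<omega>\<in>space P. G (k, j) \<omega> \<in> - {0}}"
  proof (rule measure_coordinate_eq_if_distr_eq[OF _ _ _ kj])
    show "distr m (Pi\<^sub>M adm_index (\<lambda>_. borel)) (\<lambda>x. \<lambda>i\<in>adm_index. F i x)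
      = distr P (Pi\<^sub>M adm_index (\<lambda>_. borel)) (\<lambda>\<omega>. \<lambda>i\<in>adm_index. G i \<omega>)"
      using distr_eq by (simp add: F_def G_def split_beta')
    show "F i \<in> borel_measurable m" "G i \<in> borel_measurable P" if "i \<in> adm_index" for i
      using that unfolding F_def[abs_def] G_def[abs_def]
      by (auto simp: adm_index_def intro!: f_funpow_measurable X_measurable
          measurable_compose[OF _ Zdisc_measurable] measurable_compose[OF _ Ytrunc_measurable])
  qed simp
  then show ?thesis
    by (simp add: F_def G_def)
qed

definition tail_constant :: real where
  "tail_constant = 4 * (1 + \<bar>tan (pi * \<alpha> / 2)\<bar>)"

lemma measure_coordinate_nonzero_le:
  assumes kj: "(k, j) \<in> adm_index"
  shows "measure m {x\<in>space m. f k ((T ^^ j) x) \<noteq> 0} \<le> tail_constant / real k * 2 powr (- \<alpha> * real k)"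
proof -
  interpret P: prob_space P
    by (rule prob_space_P)
  have k: "1 \<le> k"
    using kj by (simp add: adm_index_def)
  have "measure P {\<omega>\<in>space P. Zdisc k (Ytrunc k (X k (j + 1) \<omega>)) \<noteq> 0}
      \<le> measure P {\<omega>\<in>space P. 2 ^ k \<le> \<bar>X k (j + 1) \<omega>\<bar>}"
    using X_measurable[OF k, of "j + 1"]
    by (intro P.finite_measure_mono) (auto dest!: Zdisc_Ytrunc_nonzero_imp_ge)
  also have "\<dots> \<le> 2 * (real k powr (- 1 / \<alpha>)) powr \<alpha> * (2 / 2 ^ k) powr \<alpha> * (1 + \<bar>1 * tan (pi * \<alpha> / 2)\<bar>)"
    using alpha_pos by (intro stable_tail_bound[OF prob_space_P stable_X[OF k]]) auto
  also have "\<dots> = 2 * 2 powr \<alpha> * (1 + \<bar>tan (pi * \<alpha> / 2)\<bar>) / real k * 2 powr (- \<alpha> * real k)"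
  proof -
    have "(real k powr (- 1 / \<alpha>)) powr \<alpha> = 1 / real k"
      using k alpha_pos unfolding powr_powr by (simp add: powr_minus_divide)
    moreover have "(2 / 2 ^ k :: real) powr \<alpha> = 2 powr \<alpha> * 2 powr (- \<alpha> * real k)"
      by (simp add: powr_divide powr_realpow[symmetric] powr_powr powr_minus_divide mult.commute)
    ultimately show ?thesis by simp
  qed
  also have "\<dots> \<le> tail_constant / real k * 2 powr (- \<alpha> * real k)"
  proof -
    have "2 powr \<alpha> \<le> 2"
      using powr_mono[of \<alpha> 1 "2::real"] alpha_less_1 by simp
    then have "2 * 2 powr \<alpha> * (1 + \<bar>tan (pi * \<alpha> / 2)\<bar>) \<le> tail_constant"
      unfolding tail_constant_def by (intro mult_right_mono) auto
    then show ?thesis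
      by (intro mult_right_mono divide_right_mono) auto
  qed
  finally show ?thesis
    using measure_coordinate_nonzero_eq[OF kj] by simp
qed

lemma measure_UN_nonzero_le:
  assumes "2 \<le> n" and k: "log 2 (real n) / \<alpha> < real k"
  shows "measure m (\<Union>j<n. {x\<in>space m. f k ((T ^^ j) x) \<noteq> 0})
    \<le> real n * (tail_constant * \<alpha> / log 2 (real n)) * 2 powr (- \<alpha> * real k)"
proof -
  have kj: "(k, j) \<in> adm_index" if "j < n" for j
    using in_adm_index_if_large[OF alpha_pos alpha_less_1 assms that] .
  have sets: "{x\<in>space m. f k ((T ^^ j) x) \<noteq> 0} \<in> sets m" if "j < n" for j
    using kj[OF that] by (auto simp: adm_index_def intro: nonzero_set_measurable)
  have "0 < log 2 (real n)"
    using assms(1) by simp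
  moreover have "log 2 (real n) < \<alpha> * real k"
    using k alpha_pos by (simp add: divide_less_eq mult.commute)
  ultimately have "1 / real k \<le> \<alpha> / log 2 (real n)"
    using alpha_pos by (simp add: divide_simps)
  then have "tail_constant * (1 / real k) \<le> tail_constant * (\<alpha> / log 2 (real n))"
    by (rule mult_left_mono) (simp add: tail_constant_def)
  then have "tail_constant / real k \<le> tail_constant * \<alpha> / log 2 (real n)"
    by simp
  have "measure m (\<Union>j<n. {x\<in>space m. f k ((T ^^ j) x) \<noteq> 0})
      \<le> (\<Sum>j<n. measure m {x\<in>space m. f k ((T ^^ j) x) \<noteq> 0})"
    using sets by (intro measure_UNION_le) auto
  also have "\<dots> \<le> (\<Sum>j<n. tail_constant / real k * 2 powr (- \<alpha> * real k))"
    using measure_coordinate_nonzero_le[OF kj] by (intro sum_mono) simp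
  also have "\<dots> = real n * (tail_constant / real k) * 2 powr (- \<alpha> * real k)"
    by simp
  also have "\<dots> \<le> real n * (tail_constant * \<alpha> / log 2 (real n)) * 2 powr (- \<alpha> * real k)"
    using \<open>tail_constant / real k \<le> tail_constant * \<alpha> / log 2 (real n)\<close>
    by (intro mult_right_mono mult_left_mono) auto
  finally show ?thesis .
qed

definition block :: "nat \<Rightarrow> nat \<Rightarrow> 'a set" where
  "block n k = (if log 2 (real n) / \<alpha> < real k then (\<Union>j<n. {x\<in>space m. f k ((T ^^ j) x) \<noteq> 0}) else {})"

lemma block_in_sets:
  assumes "2 \<le> n"
  shows "block n k \<in> sets m"
proof (cases "log 2 (real n) / \<alpha> < real k")
  case True
  then have "1 \<le> k"
    using in_adm_index_if_large[OF alpha_pos alpha_less_1 assms True, of 0] assms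
    by (simp add: adm_index_def)
  then show ?thesis
    using True unfolding block_def by (auto intro!: sets.finite_UN nonzero_set_measurable)
qed (simp add: block_def)

lemma measure_block_le:
  assumes "2 \<le> n"
  shows "measure m (block n k) \<le> real n * (tail_constant * \<alpha> / log 2 (real n))
    * (if log 2 (real n) / \<alpha> < real k then 2 powr (- \<alpha> * real k) else 0)"
  using measure_UN_nonzero_le[OF assms, of k] by (simp add: block_def)

lemma WL_nonzero_subset_blocks:
  "{x\<in>space m. sup_norm01 (\<lambda>t. WL \<alpha> T f n t x) \<noteq> 0} \<subseteq> (\<Union>k. block n k)"
proof
  fix x assume x: "x \<in> {x\<in>space m. sup_norm01 (\<lambda>t. WL \<alpha> T f n t x) \<noteq> 0}"
  then have "\<not> (\<forall>k j. log 2 (real n) / \<alpha> < real k \<longrightarrow> j < n \<longrightarrow> f k ((T ^^ j) x) = 0)"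
    using sup_norm01_WL_eq_0[of n \<alpha> f T x] by auto
  then obtain k j where "log 2 (real n) / \<alpha> < real k" "j < n" "f k ((T ^^ j) x) \<noteq> 0"
    by blast
  with x show "x \<in> (\<Union>k. block n k)"
    by (auto simp: block_def)
qed

lemma measure_WL_nonzero_le:
  assumes "2 \<le> n"
  shows "measure m {x\<in>space m. sup_norm01 (\<lambda>t. WL \<alpha> T f n t x) \<noteq> 0}
    \<le> tail_constant * \<alpha> / (1 - 2 powr (- \<alpha>)) / log 2 (real n)"
proof -
  define L where "L = log 2 (real n) / \<alpha>"
  define g where "g k = (if L < real k then 2 powr (- \<alpha> * real k) else 0)" for k :: nat
  define c where "c = real n * (tail_constant * \<alpha> / log 2 (real n))"
  have "0 < L"
    using assms alpha_pos by (simp add: L_def)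
  then have g: "summable g" "suminf g \<le> 2 powr (- \<alpha> * L) / (1 - 2 powr (- \<alpha>))"
    using geometric_tail_powr[OF alpha_pos] by (simp_all add: g_def[abs_def])
  have block_le: "measure m (block n k) \<le> c * g k" for k
    using measure_block_le[OF assms] by (simp add: g_def c_def L_def)
  have "0 \<le> c"
    using assms alpha_pos by (simp add: c_def tail_constant_def)
  have sets: "range (block n) \<subseteq> sets m"
    using block_in_sets[OF assms] by auto
  have summable: "summable (\<lambda>k. measure m (block n k))"
    using summable_mult[OF g(1), of c] by (rule summable_comparison_test') (simp add: block_le)
  have "measure m {x\<in>space m. sup_norm01 (\<lambda>t. WL \<alpha> T f n t x) \<noteq> 0} \<le> measure m (\<Union>k. block n k)"
    using WL_nonzero_subset_blocks sets by (intro m.finite_measure_mono) auto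
  also have "\<dots> \<le> (\<Sum>k. measure m (block n k))"
    using sets summable by (rule m.finite_measure_subadditive_countably)
  also have "\<dots> \<le> c * suminf g"
    using block_le summable g(1) by (subst suminf_mult[symmetric]) (auto intro!: suminf_le summable_mult)
  also have "\<dots> \<le> c * (2 powr (- \<alpha> * L) / (1 - 2 powr (- \<alpha>)))"
    using g(2) \<open>0 \<le> c\<close> by (rule mult_left_mono)
  also have "2 powr (- \<alpha> * L) = 1 / real n"
    using assms alpha_pos by (simp add: L_def powr_minus_divide)
  also have "c * (1 / real n / (1 - 2 powr (- \<alpha>))) = tail_constant * \<alpha> / (1 - 2 powr (- \<alpha>)) / log 2 (real n)"
    using assms by (simp add: c_def)
  finally show ?thesis .
qed

end

theorem lemma3p1:
  fixes m :: "'a measure" and T :: "'a \<Rightarrow> 'a" and \<alpha> :: real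
    and f :: "nat \<Rightarrow> 'a \<Rightarrow> real"
    and P :: "'b measure" and X :: "nat \<Rightarrow> nat \<Rightarrow> 'b \<Rightarrow> real"
  assumes "prob_space m"
    and "measure_preserving_sys m T"
    and "ergodic_sys m T"
    and "aperiodic_sys m T"
    and "0 < \<alpha>" and "\<alpha> < 1"
    and "prob_space P"
    and "prob_space.indep_vars P (\<lambda>_. borel) (\<lambda>(k, i). X k i) {(k, i). k \<ge> 1 \<and> i \<ge> 1}"
    and "\<And>k i. k \<ge> 1 \<Longrightarrow> i \<ge> 1 \<Longrightarrow>
           has_stable_law P (X k i) \<alpha> (real k powr (- 1 / \<alpha>)) 1 0"
    and "\<And>k. k \<ge> 1 \<Longrightarrow> f k \<in> borel_measurable m"
    and "distr m (Pi\<^sub>M adm_index (\<lambda>_. borel))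
           (\<lambda>x. \<lambda>(k, j)\<in>adm_index. f k ((T ^^ j) x))
         = distr P (Pi\<^sub>M adm_index (\<lambda>_. borel))
           (\<lambda>\<omega>. \<lambda>(k, j)\<in>adm_index. Zdisc k (Ytrunc k (X k (j + 1) \<omega>)))"
  shows "(\<lambda>n. measure m {x \<in> space m. sup_norm01 (\<lambda>t. WL \<alpha> T f n t x) \<noteq> 0})
           \<longlonglongrightarrow> 0"
proof -
  have "T \<in> measurable m m"
    using assms(2) by (simp add: measure_preserving_sys_def)
  then interpret admissible_system m T \<alpha> f P X
    by (intro admissible_system.intro assms(1,5-7,9-11))
  let ?c = "tail_constant * \<alpha> / (1 - 2 powr (- \<alpha>))"
  have "filterlim (\<lambda>n::nat. log 2 (real n)) at_top sequentially"
    by real_asymp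
  then have lim: "(\<lambda>n. ?c / log 2 (real n)) \<longlonglongrightarrow> 0"
    by (intro tendsto_divide_0[OF tendsto_const] filterlim_at_top_imp_at_infinity)
  have le: "\<forall>\<^sub>F n in sequentially.
      measure m {x \<in> space m. sup_norm01 (\<lambda>t. WL \<alpha> T f n t x) \<noteq> 0} \<le> ?c / log 2 (real n)"
    using eventually_ge_at_top[of 2] by eventually_elim (rule measure_WL_nonzero_le)
  show ?thesis
    by (rule tendsto_sandwich[OF _ le tendsto_const lim]) simp
qed

end
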